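(* For every set $S$ of $\omega$-sharing groups and every idempotent substitution $\theta$, and for every order in which the bindings of $\theta$ are processed in the definition of $\mathrm{mgu}_\omega$, we have $\mathrm{mgu}_\omega(S,\theta)=\mathrm{mgu_p}(S,\theta)$. In other words, sequential (one binding at a time) abstract unification coincides with parallel abstract unification.
   Context: Fix a first-order signature and a denumerable set of variables $\mathcal V$. For a term $t$ and variable $v$, $\mathit{occ}(v,t)$ is the number of occurrences of $v$ in $t$. An $\omega$-sharing group is a multiset of variables with finite support, i.e. a function $B:\mathcal V\to\mathbb N$ that is nonzero on only finitely many variables; $\{\!\!\{\}\!\!\}$ is the empty multiset, and the sum of multisets is $(A\uplus B)(v)=A(v)+B(v)$. The multiplicity of an $\omega$-sharing group $B$ in a term $t$ is $\chi(B,t)=\sum_{v} B(v)\cdot\mathit{occ}(v,t)$. A multigraph $G=\langle N_G,E_G,\mathrm{src}_G,\mathrm{tgt}_G\rangle$ consists of a nonempty set of nodes $N_G$, a set of edges $E_G$, and functions $\mathrm{src}_G,\mathrm{tgt}_G:E_G\to N_G$ (multiple distinct edges, including self-loops, may join the same nodes). The out-degree (in-degree) of $n$ is the number of edges $e$ with $\mathrm{src}_G(e)=n$ (resp. $\mathrm{tgt}_G(e)=n$). A path between $n_1$ and $n_k$ is a nonempty sequence of nodes $n_1\dots n_k$ such that consecutive nodes are joined by an edge in either direction; $G$ is connected if every pair of nodes is joined by a path. A (parallel) sharing graph for a set $S$ of $\omega$-sharing groups and an idempotent substitution $\theta=\{x_1/t_1,\dots,x_p/t_p\}$ (with $p\ge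 0$) is a family $\mathcal G=\{G^i\}_{i\in[1,p]}$ of multigraphs over a common node set $N_{\mathcal G}$, with a labeling $l_{\mathcal G}:N_{\mathcal G}\to S$, such that: (i) for every node $n$ and every $i$, the out-degree of $n$ in $G^i$ equals $\chi(l_{\mathcal G}(n),x_i)$ and the in-degree of $n$ in $G^i$ equals $\chi(l_{\mathcal G}(n),t_i)$; (ii) the edge sets $E_{G^i}$ are pairwise disjoint; (iii) the flattening of $\mathcal G$, i.e. the multigraph with nodes $N_{\mathcal G}$, edges $\bigcup_i E_{G^i}$ and source/target inherited from the layers, is connected. The resultant $\omega$-sharing group is $\mathit{res}(\mathcal G)=\biguplus_{n\in N_{\mathcal G}} l_{\mathcal G}(n)$. The parallel abstract unification is $\mathrm{mgu_p}(S,\theta)=\{\mathit{res}(\mathcal G)\mid \mathcal G \text{ a sharing graph for } S \text{ and } \theta\}$. The sequential abstract unification $\mathrm{mgu}_\omega$ is defined recursively by $\mathrm{mgu}_\omega(S,\epsilon)=S$ (with $\epsilon$ the empty substitution) and $\mathrm{mgu}_\omega(S,\{x/t\}\cup\theta)=\mathrm{mgu}_\omega(\mathrm{mgu_p}(S,\{x/t\}),\theta)$, where $\{x/t\}\cup\theta$ is idempotent and $x\notin\mathrm{dom}(\theta)$. *)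

theory Defs
  imports Main "HOL-Library.Multiset" "HOL-Library.Countable"
begin

datatype ('f, 'v) fterm = Var 'v | Fun 'f "('f, 'v) fterm list"

fun occ :: "'v \<Rightarrow> ('f, 'v) fterm \<Rightarrow> nat" where
  "occ v (Var w) = (if v = w then 1 else 0)"
| "occ v (Fun f ts) = sum_list (map (occ v) ts)"

fun subst_apply :: "('v \<Rightarrow> ('f, 'v) fterm) \<Rightarrow> ('f, 'v) fterm \<Rightarrow> ('f, 'v) fterm" where
  "subst_apply \<sigma> (Var v) = \<sigma> v"
| "subst_apply \<sigma> (Fun f ts) = Fun f (map (subst_apply \<sigma>) ts)"

definition subst_dom :: "('v \<Rightarrow> ('f, 'v) fterm) \<Rightarrow> 'v set" where
  "subst_dom \<sigma> = {x. \<sigma> x \<noteq> Var x}"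

definition idempotent_subst :: "('v \<Rightarrow> ('f, 'v) fterm) \<Rightarrow> bool" where
  "idempotent_subst \<sigma> \<longleftrightarrow> finite (subst_dom \<sigma>) \<and>
     (\<forall>t. subst_apply \<sigma> (subst_apply \<sigma> t) = subst_apply \<sigma> t)"

definition single_subst :: "'v \<Rightarrow> ('f, 'v) fterm \<Rightarrow> ('v \<Rightarrow> ('f, 'v) fterm)" where
  "single_subst x t = (\<lambda>v. if v = x then t else Var v)"

text \<open>omega-sharing groups are finite multisets of variables.
  Multiplicity chi(B,t) = sum_v B(v) * occ(v,t).\<close>
definition chi :: "'v multiset \<Rightarrow> ('f, 'v) fterm \<Rightarrow> nat" where
  "chi B t = (\<Sum>v\<in>set_mset B. count B v * occ v t)"

text \<open>A (parallel) sharing graph for S and \<sigma>: layers indexed by the variables x in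
  dom \<sigma> (binding x/\<sigma> x).\<close>
definition sharing_graph ::
  "'v multiset set \<Rightarrow> ('v \<Rightarrow> ('f, 'v) fterm) \<Rightarrow> nat set \<Rightarrow> ('v \<Rightarrow> nat set) \<Rightarrow>
   ('v \<Rightarrow> nat \<Rightarrow> nat) \<Rightarrow> ('v \<Rightarrow> nat \<Rightarrow> nat) \<Rightarrow> (nat \<Rightarrow> 'v multiset) \<Rightarrow> bool" where
  "sharing_graph S \<sigma> N E src tgt l \<longleftrightarrow>
     finite N \<and> N \<noteq> {} \<and>
     (\<forall>n\<in>N. l n \<in> S) \<and>
     (\<forall>x\<in>subst_dom \<sigma>. finite (E x) \<and> (\<forall>e\<in>E x. src x e \<in> N \<and> tgt x e \<in> N)) \<and>
     (\<forall>x\<in>subst_dom \<sigma>. \<forall>n\<in>N.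
         card {e\<in>E x. src x e = n} = chi (l n) (Var x :: ('f, 'v) fterm) \<and>
         card {e\<in>E x. tgt x e = n} = chi (l n) (\<sigma> x)) \<and>
     (\<forall>x\<in>subst_dom \<sigma>. \<forall>y\<in>subst_dom \<sigma>. x \<noteq> y \<longrightarrow> E x \<inter> E y = {}) \<and>
     (\<forall>n\<in>N. \<forall>m\<in>N. (n, m) \<in>
        ({(src x e, tgt x e) | x e. x \<in> subst_dom \<sigma> \<and> e \<in> E x} \<union>
         {(tgt x e, src x e) | x e. x \<in> subst_dom \<sigma> \<and> e \<in> E x})\<^sup>*)"

definition mgu_p :: "'v multiset set \<Rightarrow> ('v \<Rightarrow> ('f, 'v) fterm) \<Rightarrow> 'v multiset set" where
  "mgu_p S \<sigma> = {(\<Sum>n\<in>N. l n) | N E src tgt l. sharing_graph S \<sigma> N E src tgt l}"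

fun mgu_omega :: "'v multiset set \<Rightarrow> ('v \<times> ('f, 'v) fterm) list \<Rightarrow> 'v multiset set" where
  "mgu_omega S [] = S"
| "mgu_omega S ((x, t) # bs) = mgu_omega (mgu_p S (single_subst x t)) bs"

end

theory Submission
  imports Defs "HOL-Library.Nat_Bijection"
begin

text \<open>
  Since \<open>mgu_omega\<close> processes one binding at a time, it suffices by induction on the list of
  bindings that splitting off a binding \<open>x/\<sigma> x\<close> does not change parallel unification:
  \<open>mgu_p (mgu_p S {x/\<sigma> x}) (\<sigma> without x) = mgu_p S \<sigma>\<close>.
  Given a sharing graph for \<open>\<sigma>\<close>, every connected component of its \<open>x\<close>-layer is a sharing graph
  for the single binding, and contracting each component to one node labelled by its resultant gives a
  sharing graph for the remaining bindings with the same resultant.  Conversely, given a sharing graph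
  for the remaining bindings, each node is labelled by the resultant of a sharing graph for \<open>x/\<sigma> x\<close>;
  substituting these graphs for the nodes and distributing the incident edges of the other layers among
  the subnodes yields a sharing graph for \<open>\<sigma>\<close>.  The distribution exists because \<open>chi\<close> is additive
  in the sharing group, so the degrees required at a node are the sums of those required at its subnodes.
\<close>

lemma chi_eq_sum_superset:
  "finite F \<Longrightarrow> set_mset B \<subseteq> F \<Longrightarrow> chi B t = (\<Sum>v\<in>F. count B v * occ v t)"
  unfolding chi_def by (rule sum.mono_neutral_left) (auto simp: not_in_iff)

lemma chi_empty [simp]: "chi {#} t = 0"
  by (simp add: chi_def)

lemma chi_plus [simp]: "chi (A + B) t = chi A t + chi B t"
proof -
  let ?F = "set_mset A \<union> set_mset B"
  have "chi (A + B) t = (\<Sum>v\<in>?F. count (A + B) v * occ v t)"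
    by (rule chi_eq_sum_superset) auto
  also have "\<dots> = (\<Sum>v\<in>?F. count A v * occ v t) + (\<Sum>v\<in>?F. count B v * occ v t)"
    by (simp add: sum.distrib algebra_simps)
  also have "\<dots> = chi A t + chi B t"
    by (simp add: chi_eq_sum_superset[symmetric])
  finally show ?thesis .
qed

lemma chi_sum: "finite N \<Longrightarrow> chi (\<Sum>n\<in>N. l n) t = (\<Sum>n\<in>N. chi (l n) t)"
  by (induction N rule: finite_induct) auto

lemma subst_dom_single_subst: "t \<noteq> Var x \<Longrightarrow> subst_dom (single_subst x t) = {x}"
  by (auto simp: subst_dom_def single_subst_def)

lemma subst_dom_fun_upd_Var: "subst_dom (\<sigma>(x := Var x)) = subst_dom \<sigma> - {x}"
  by (auto simp: subst_dom_def)

lemma rtrancl_map_rtrancl: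
  assumes "(a, b) \<in> r\<^sup>*" and "\<And>u v. (u, v) \<in> r \<Longrightarrow> (f u, f v) \<in> s\<^sup>*"
  shows "(f a, f b) \<in> s\<^sup>*"
  using assms by (induction rule: rtrancl_induct) (auto intro: rtrancl_trans)

lemma card_fibres_compose:
  assumes "finite A" and "finite N" and "f ` A \<subseteq> N"
  shows "card {a\<in>A. g (f a) = r} = (\<Sum>m\<in>{m\<in>N. g m = r}. card {a\<in>A. f a = m})"
proof -
  have "card {a\<in>A. g (f a) = r} = card (\<Union>m\<in>{m\<in>N. g m = r}. {a\<in>A. f a = m})"
    using assms(3) by (intro arg_cong[where f = card]) auto
  also have "\<dots> = (\<Sum>m\<in>{m\<in>N. g m = r}. card {a\<in>A. f a = m})"
    using assms(1,2) by (intro card_UN_disjoint) auto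
  finally show ?thesis .
qed

lemma exists_map_with_fibre_cards:
  assumes "finite A" and "finite M" and "card A = (\<Sum>n\<in>M. c n)"
  shows "\<exists>f. (\<forall>a\<in>A. f a \<in> M) \<and> (\<forall>n\<in>M. card {a\<in>A. f a = n} = c n)"
proof -
  let ?B = "Sigma M (\<lambda>n. {..<c n})"
  have "card ?B = (\<Sum>n\<in>M. c n)"
    using assms(2) by (subst card_SigmaI) auto
  then obtain h where h: "bij_betw h A ?B"
    using assms finite_same_card_bij[of A ?B] by auto
  have "card {a\<in>A. fst (h a) = n} = c n" if "n \<in> M" for n
  proof -
    have "inj_on h {a\<in>A. fst (h a) = n}"
      using bij_betw_imp_inj_on[OF h] by (rule inj_on_subset) auto
    then have "card {a\<in>A. fst (h a) = n} = card (h ` {a\<in>A. fst (h a) = n})"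
      by (simp add: card_image)
    also have "h ` {a\<in>A. fst (h a) = n} = {p\<in>h ` A. fst p = n}"
      by blast
    also have "\<dots> = {n} \<times> {..<c n}"
      unfolding bij_betw_imp_surj_on[OF h] using that by auto
    finally show ?thesis
      by simp
  qed
  moreover have "\<forall>a\<in>A. fst (h a) \<in> M"
    using bij_betwE[OF h] by auto
  ultimately show ?thesis
    by (intro exI[of _ "\<lambda>a. fst (h a)"]) simp
qed

lemma exists_layered_refinement_with_fibre_cards:
  assumes "\<And>y. y \<in> D \<Longrightarrow> finite (A y)" and "\<And>r. r \<in> R \<Longrightarrow> finite (M r)"
    and "\<And>y r. y \<in> D \<Longrightarrow> r \<in> R \<Longrightarrow> card {a\<in>A y. p y a = r} = (\<Sum>n\<in>M r. c y r n)"
  shows "\<exists>h. \<forall>y\<in>D. (\<forall>a\<in>A y. p y a \<in> R \<longrightarrow> h y a \<in> M (p y a)) \<and>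
    (\<forall>r\<in>R. \<forall>n\<in>M r. card {a\<in>A y. p y a = r \<and> h y a = n} = c y r n)"
proof -
  have "\<forall>y\<in>D. \<exists>g. \<forall>r\<in>R. (\<forall>a\<in>{a\<in>A y. p y a = r}. g r a \<in> M r) \<and>
      (\<forall>n\<in>M r. card {a\<in>{a\<in>A y. p y a = r}. g r a = n} = c y r n)"
    using assms by (intro ballI bchoice exists_map_with_fibre_cards) auto
  then have "\<exists>f. \<forall>y\<in>D. \<forall>r\<in>R. (\<forall>a\<in>{a\<in>A y. p y a = r}. f y r a \<in> M r) \<and>
      (\<forall>n\<in>M r. card {a\<in>{a\<in>A y. p y a = r}. f y r a = n} = c y r n)"
    by (rule bchoice)
  then obtain f where f_in: "\<And>y r a. y \<in> D \<Longrightarrow> r \<in> R \<Longrightarrow> a \<in> A y \<Longrightarrow> p y a = r \<Longrightarrow> f y r a \<in> M r"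
    and f_card: "\<And>y r n. y \<in> D \<Longrightarrow> r \<in> R \<Longrightarrow> n \<in> M r \<Longrightarrow>
      card {a\<in>{a\<in>A y. p y a = r}. f y r a = n} = c y r n"
    by blast
  have "{a\<in>{a\<in>A y. p y a = r}. f y r a = n} = {a\<in>A y. p y a = r \<and> f y (p y a) a = n}" for y r n
    by auto
  then show ?thesis
    using f_in f_card by (intro exI[of _ "\<lambda>y a. f y (p y a) a"]) simp
qed

definition layer_links ::
  "('v \<Rightarrow> nat set) \<Rightarrow> ('v \<Rightarrow> nat \<Rightarrow> nat) \<Rightarrow> ('v \<Rightarrow> nat \<Rightarrow> nat) \<Rightarrow> 'v \<Rightarrow> (nat \<times> nat) set" where
  "layer_links E src tgt x = {(src x e, tgt x e) | e. e \<in> E x} \<union> {(tgt x e, src x e) | e. e \<in> E x}"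

lemma sym_layer_links: "sym (layer_links E src tgt x)"
  by (auto simp: layer_links_def sym_def)

lemma links_eq_Union_layer_links:
  "{(src x e, tgt x e) | x e. x \<in> D \<and> e \<in> E x} \<union> {(tgt x e, src x e) | x e. x \<in> D \<and> e \<in> E x} =
    (\<Union>x\<in>D. layer_links E src tgt x)"
  by (auto simp: layer_links_def)

lemma sharing_graph_iff:
  fixes \<sigma> :: "'v \<Rightarrow> ('f, 'v) fterm"
  shows "sharing_graph S \<sigma> N E src tgt l \<longleftrightarrow>
     finite N \<and> N \<noteq> {} \<and>
     (\<forall>n\<in>N. l n \<in> S) \<and>
     (\<forall>x\<in>subst_dom \<sigma>. finite (E x) \<and> (\<forall>e\<in>E x. src x e \<in> N \<and> tgt x e \<in> N)) \<and>
     (\<forall>x\<in>subst_dom \<sigma>. \<forall>n\<in>N.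
         card {e\<in>E x. src x e = n} = chi (l n) (Var x :: ('f, 'v) fterm) \<and>
         card {e\<in>E x. tgt x e = n} = chi (l n) (\<sigma> x)) \<and>
     (\<forall>x\<in>subst_dom \<sigma>. \<forall>y\<in>subst_dom \<sigma>. x \<noteq> y \<longrightarrow> E x \<inter> E y = {}) \<and>
     (\<forall>n\<in>N. \<forall>m\<in>N. (n, m) \<in> (\<Union>x\<in>subst_dom \<sigma>. layer_links E src tgt x)\<^sup>*)"
  unfolding sharing_graph_def links_eq_Union_layer_links ..

lemma mgu_pI: "sharing_graph S \<sigma> N E src tgt l \<Longrightarrow> sum l N \<in> mgu_p S \<sigma>"
  unfolding mgu_p_def by blast

lemma mgu_p_empty_subst:
  assumes "subst_dom \<sigma> = {}"
  shows "mgu_p S \<sigma> = S"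
proof -
  have "sharing_graph S \<sigma> N E src tgt l \<longleftrightarrow> (\<exists>n. N = {n} \<and> l n \<in> S)" for N E src tgt l
  proof -
    have "sharing_graph S \<sigma> N E src tgt l \<longleftrightarrow> N \<noteq> {} \<and> (\<forall>n\<in>N. l n \<in> S) \<and> (\<forall>n\<in>N. \<forall>m\<in>N. n = m)"
      unfolding sharing_graph_iff assms by (auto intro: finite_subset[of N "{_}"])
    also have "\<dots> \<longleftrightarrow> (\<exists>n. N = {n} \<and> l n \<in> S)"
    proof
      assume "N \<noteq> {} \<and> (\<forall>n\<in>N. l n \<in> S) \<and> (\<forall>n\<in>N. \<forall>m\<in>N. n = m)"
      moreover from this obtain n where "n \<in> N"
        by blast
      ultimately show "\<exists>n. N = {n} \<and> l n \<in> S"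
        by blast
    qed auto
    finally show ?thesis .
  qed
  note single_node = this
  show ?thesis
  proof
    show "mgu_p S \<sigma> \<subseteq> S"
      unfolding mgu_p_def using single_node by auto
    show "S \<subseteq> mgu_p S \<sigma>"
    proof
      fix B assume "B \<in> S"
      then have "sharing_graph S \<sigma> {0} E src tgt (\<lambda>_. B)" for E src tgt
        using single_node by simp
      then show "B \<in> mgu_p S \<sigma>"
        using mgu_pI by fastforce
    qed
  qed
qed

lemma sharing_graph_collapse_layer:
  fixes \<sigma> :: "'v \<Rightarrow> ('f, 'v) fterm" and rep :: "nat \<Rightarrow> nat"
  assumes G: "sharing_graph S \<sigma> N E src tgt l"
    and collapse: "\<And>e. e \<in> E x \<Longrightarrow> rep (src x e) = rep (tgt x e)"
    and classes: "\<And>n. n \<in> N \<Longrightarrow> sum l {m\<in>N. rep m = rep n} \<in> S'"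
  shows "sharing_graph S' (\<sigma>(x := Var x)) (rep ` N) E (\<lambda>y e. rep (src y e)) (\<lambda>y e. rep (tgt y e))
           (\<lambda>r. sum l {m\<in>N. rep m = r})"
proof -
  have fN: "finite N" and neN: "N \<noteq> {}"
    and fE: "\<And>y. y \<in> subst_dom \<sigma> \<Longrightarrow> finite (E y)"
    and ends: "\<And>y e. y \<in> subst_dom \<sigma> \<Longrightarrow> e \<in> E y \<Longrightarrow> src y e \<in> N \<and> tgt y e \<in> N"
    and deg_src: "\<And>y n. y \<in> subst_dom \<sigma> \<Longrightarrow> n \<in> N \<Longrightarrow>
                     card {e\<in>E y. src y e = n} = chi (l n) (Var y :: ('f, 'v) fterm)"
    and deg_tgt: "\<And>y n. y \<in> subst_dom \<sigma> \<Longrightarrow> n \<in> N \<Longrightarrow> card {e\<in>E y. tgt y e = n} = chi (l n) (\<sigma> y)"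
    and disj: "\<And>y z. y \<in> subst_dom \<sigma> \<Longrightarrow> z \<in> subst_dom \<sigma> \<Longrightarrow> y \<noteq> z \<Longrightarrow> E y \<inter> E z = {}"
    and conn: "\<And>n m. n \<in> N \<Longrightarrow> m \<in> N \<Longrightarrow> (n, m) \<in> (\<Union>y\<in>subst_dom \<sigma>. layer_links E src tgt y)\<^sup>*"
    using G unfolding sharing_graph_iff by blast+
  have class_degree: "card {e\<in>E y. rep (endpt y e) = r} = chi (sum l {m\<in>N. rep m = r}) t"
    if "y \<in> subst_dom \<sigma>" and "\<And>e. e \<in> E y \<Longrightarrow> endpt y e \<in> N"
      and "\<And>n. n \<in> N \<Longrightarrow> card {e\<in>E y. endpt y e = n} = chi (l n) t" for y endpt r t
  proof -
    have "card {e\<in>E y. rep (endpt y e) = r} = (\<Sum>m\<in>{m\<in>N. rep m = r}. card {e\<in>E y. endpt y e = m})"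
      using that fN fE by (intro card_fibres_compose) auto
    also have "\<dots> = chi (sum l {m\<in>N. rep m = r}) t"
      using that fN by (simp add: chi_sum)
    finally show ?thesis .
  qed
  let ?links' = "\<Union>y\<in>subst_dom \<sigma> - {x}. layer_links E (\<lambda>y e. rep (src y e)) (\<lambda>y e. rep (tgt y e)) y"
  have "(rep u, rep v) \<in> ?links'\<^sup>*" if link: "(u, v) \<in> (\<Union>y\<in>subst_dom \<sigma>. layer_links E src tgt y)" for u v
  proof -
    obtain y e where y: "y \<in> subst_dom \<sigma>" and e: "e \<in> E y"
      and uv: "(u, v) = (src y e, tgt y e) \<or> (u, v) = (tgt y e, src y e)"
      using link by (auto simp: layer_links_def)
    show ?thesis
    proof (cases "y = x")
      case True
      then show ?thesis
        using collapse e uv by auto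
    next
      case False
      then have "(rep u, rep v) \<in> ?links'"
        using y e uv by (auto simp: layer_links_def)
      then show ?thesis ..
    qed
  qed
  then have conn': "(rep n, rep m) \<in> ?links'\<^sup>*" if "n \<in> N" "m \<in> N" for n m
    using conn[OF that] by (rule rtrancl_map_rtrancl[rotated])
  show ?thesis
    unfolding sharing_graph_iff subst_dom_fun_upd_Var
    using fN neN classes fE ends disj conn' deg_src deg_tgt
    by (auto intro!: class_degree)
qed

lemma rtrancl_layer_links_iff_Image_eq:
  "(a, b) \<in> (layer_links E src tgt x)\<^sup>* \<longleftrightarrow>
    (layer_links E src tgt x)\<^sup>* `` {a} = (layer_links E src tgt x)\<^sup>* `` {b}"
proof -
  have "equiv UNIV ((layer_links E src tgt x)\<^sup>*)"
    by (simp add: equiv_def refl_rtrancl trans_rtrancl sym_rtrancl sym_layer_links)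
  then show ?thesis
    by (simp add: equiv_class_eq_iff)
qed

lemma rtrancl_layer_links_Image_subset:
  assumes G: "sharing_graph S \<sigma> N E src tgt l" and x: "x \<in> subst_dom \<sigma>" and r: "r \<in> N"
  shows "(layer_links E src tgt x)\<^sup>* `` {r} \<subseteq> N"
proof
  have ends: "src x e \<in> N \<and> tgt x e \<in> N" if "e \<in> E x" for e
    using G x that unfolding sharing_graph_iff by blast
  fix m assume "m \<in> (layer_links E src tgt x)\<^sup>* `` {r}"
  then have "(r, m) \<in> (layer_links E src tgt x)\<^sup>*"
    by simp
  then show "m \<in> N"
    by (induction rule: rtrancl_induct) (use r ends in \<open>auto simp: layer_links_def\<close>)
qed

lemma layer_component_closed:
  assumes "e \<in> E x"
  shows "src x e \<in> (layer_links E src tgt x)\<^sup>* `` {r} \<longleftrightarrow> tgt x e \<in> (layer_links E src tgt x)\<^sup>* `` {r}"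
proof -
  have "(src x e, tgt x e) \<in> (layer_links E src tgt x)\<^sup>*"
    using assms by (auto simp: layer_links_def)
  then show ?thesis
    by (metis Image_singleton_iff rtrancl_layer_links_iff_Image_eq)
qed

lemma layer_component_connected:
  fixes E :: "'v \<Rightarrow> nat set" and src tgt :: "'v \<Rightarrow> nat \<Rightarrow> nat" and x :: 'v and r :: nat
  defines "C \<equiv> (layer_links E src tgt x)\<^sup>* `` {r}"
  assumes n: "n \<in> C" and m: "m \<in> C"
  shows "(n, m) \<in> (layer_links (\<lambda>_. {e\<in>E x. src x e \<in> C}) src tgt x)\<^sup>*"
proof -
  let ?R = "layer_links E src tgt x"
  have in_C: "a \<in> C \<longleftrightarrow> ?R\<^sup>* `` {a} = ?R\<^sup>* `` {r}" for a
    unfolding C_def Image_singleton_iff rtrancl_layer_links_iff_Image_eq by (rule eq_commute)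
  have "(n, m) \<in> ?R\<^sup>*"
    using n m unfolding in_C rtrancl_layer_links_iff_Image_eq by simp
  then show ?thesis
  proof (induction rule: rtrancl_induct)
    case (step a b)
    have "a \<in> C"
      using n step.hyps(1) unfolding in_C rtrancl_layer_links_iff_Image_eq by simp
    obtain e where e: "e \<in> E x" and ab: "(a, b) = (src x e, tgt x e) \<or> (a, b) = (tgt x e, src x e)"
      using step.hyps(2) by (auto simp: layer_links_def)
    have "src x e \<in> C"
      using \<open>a \<in> C\<close> ab layer_component_closed[of e E x src tgt r, OF e] unfolding C_def by auto
    then have "(a, b) \<in> layer_links (\<lambda>_. {e\<in>E x. src x e \<in> C}) src tgt x"
      using e ab by (auto simp: layer_links_def)
    with step.IH show ?case ..
  qed simp
qed

lemma sharing_graph_layer_component: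
  fixes \<sigma> :: "'v \<Rightarrow> ('f, 'v) fterm"
  assumes G: "sharing_graph S \<sigma> N E src tgt l" and x: "x \<in> subst_dom \<sigma>" and r: "r \<in> N"
  defines "C \<equiv> (layer_links E src tgt x)\<^sup>* `` {r}"
  shows "sharing_graph S (single_subst x (\<sigma> x)) C (\<lambda>_. {e\<in>E x. src x e \<in> C}) src tgt l"
proof -
  let ?E = "\<lambda>_::'v. {e\<in>E x. src x e \<in> C}"
  have fN: "finite N" and lS: "\<forall>n\<in>N. l n \<in> S" and fE: "finite (E x)"
    and deg_src: "\<And>n. n \<in> N \<Longrightarrow> card {e\<in>E x. src x e = n} = chi (l n) (Var x :: ('f, 'v) fterm)"
    and deg_tgt: "\<And>n. n \<in> N \<Longrightarrow> card {e\<in>E x. tgt x e = n} = chi (l n) (\<sigma> x)"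
    using G x unfolding sharing_graph_iff by blast+
  have C_N: "C \<subseteq> N"
    unfolding C_def using G x r by (rule rtrancl_layer_links_Image_subset)
  have closed: "src x e \<in> C \<longleftrightarrow> tgt x e \<in> C" if "e \<in> E x" for e
    unfolding C_def using that by (rule layer_component_closed)
  have dom_x: "subst_dom (single_subst x (\<sigma> x)) = {x}"
    using x by (intro subst_dom_single_subst) (simp add: subst_dom_def)
  show ?thesis
    unfolding sharing_graph_iff dom_x
  proof (intro conjI ballI)
    show "finite C"
      using C_N fN by (rule finite_subset)
    show "C \<noteq> {}"
      unfolding C_def by auto
    show "l n \<in> S" if "n \<in> C" for n
      using that C_N lS by auto
    fix y assume "y \<in> {x}"
    then have y: "y = x"
      by simp
    show "finite (?E y)"
      using fE by simp
    show "src y e \<in> C" and "tgt y e \<in> C" if "e \<in> ?E y" for e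
      using that closed y by auto
    fix n assume n: "n \<in> C"
    have "{e\<in>?E y. src y e = n} = {e\<in>E x. src x e = n}" and "{e\<in>?E y. tgt y e = n} = {e\<in>E x. tgt x e = n}"
      using n closed y by auto
    then show "card {e\<in>?E y. src y e = n} = chi (l n) (Var y :: ('f, 'v) fterm)"
      and "card {e\<in>?E y. tgt y e = n} = chi (l n) (single_subst x (\<sigma> x) y)"
      using n C_N deg_src deg_tgt y by (auto simp: single_subst_def)
  qed (use layer_component_connected[of _ E src tgt x r] in \<open>auto simp: C_def\<close>)
qed

lemma mgu_p_subset_split_binding:
  fixes \<sigma> :: "'v \<Rightarrow> ('f, 'v) fterm"
  assumes x: "x \<in> subst_dom \<sigma>"
  shows "mgu_p S \<sigma> \<subseteq> mgu_p (mgu_p S (single_subst x (\<sigma> x))) (\<sigma>(x := Var x))"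
proof
  fix B assume "B \<in> mgu_p S \<sigma>"
  then obtain N E src tgt l where G: "sharing_graph S \<sigma> N E src tgt l" and B: "B = sum l N"
    unfolding mgu_p_def by blast
  have fN: "finite N"
    using G unfolding sharing_graph_iff by blast
  let ?R = "layer_links E src tgt x"
  define comp where "comp n = ?R\<^sup>* `` {n}" for n
  define rep where "rep n = Min (comp n)" for n
  have comp_N: "comp n \<subseteq> N" if "n \<in> N" for n
    unfolding comp_def using G x that by (rule rtrancl_layer_links_Image_subset)
  have comp_eq: "(a, b) \<in> ?R\<^sup>* \<longleftrightarrow> comp a = comp b" for a b
    unfolding comp_def by (rule rtrancl_layer_links_iff_Image_eq)
  have rep_comp: "comp (rep n) = comp n" if "n \<in> N" for n
  proof -
    have "rep n \<in> comp n"
      unfolding rep_def using comp_N[OF that] fN by (intro Min_in) (auto simp: comp_def intro: finite_subset)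
    then show ?thesis
      using comp_eq by (simp add: comp_def)
  qed
  have rep_eq: "rep m = rep n \<longleftrightarrow> comp m = comp n" if "m \<in> N" "n \<in> N" for m n
    using that rep_comp by (metis rep_def)
  have rep_class: "{m\<in>N. rep m = rep n} = comp n" if n: "n \<in> N" for n
  proof -
    have "m \<in> comp n \<longleftrightarrow> m \<in> N \<and> comp m = comp n" for m
      using comp_N[OF n] comp_eq[of n m] by (auto simp: comp_def)
    then show ?thesis
      using rep_eq n by blast
  qed
  have collapsed: "sharing_graph (mgu_p S (single_subst x (\<sigma> x))) (\<sigma>(x := Var x)) (rep ` N) E
          (\<lambda>y e. rep (src y e)) (\<lambda>y e. rep (tgt y e)) (\<lambda>r. sum l {m\<in>N. rep m = r})"
  proof (rule sharing_graph_collapse_layer[OF G])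
    show "rep (src x e) = rep (tgt x e)" if "e \<in> E x" for e
    proof -
      have "(src x e, tgt x e) \<in> ?R\<^sup>*"
        using that by (auto simp: layer_links_def)
      then show ?thesis
        unfolding rep_def comp_eq by simp
    qed
    show "sum l {m\<in>N. rep m = rep n} \<in> mgu_p S (single_subst x (\<sigma> x))" if "n \<in> N" for n
      unfolding rep_class[OF that] comp_def
      using sharing_graph_layer_component[OF G x that] by (rule mgu_pI)
  qed
  have "(\<Sum>r\<in>rep ` N. sum l {m\<in>N. rep m = r}) = sum l N"
    by (rule sum.group) (use fN in auto)
  with mgu_pI[OF collapsed] show "B \<in> mgu_p (mgu_p S (single_subst x (\<sigma> x))) (\<sigma>(x := Var x))"
    unfolding B by simp
qed

text \<open>
  The expanded graph has the pairs \<open>(r, n)\<close> with \<open>n \<in> subN r\<close> as nodes, encoded by \<open>prod_encode\<close>.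
  An edge \<open>e\<close> of an outer layer \<open>y \<noteq> x\<close> is attached at the subnodes \<open>src_sub y e\<close> and \<open>tgt_sub y e\<close>;
  the edges of layer \<open>x\<close> are those of the inner graphs, numbered oddly so that they cannot collide
  with the (doubled) outer edges.
\<close>

locale sharing_graph_expansion =
  fixes S :: "'v multiset set" and \<sigma> :: "'v \<Rightarrow> ('f, 'v) fterm" and x :: 'v
    and N :: "nat set" and E :: "'v \<Rightarrow> nat set" and src tgt :: "'v \<Rightarrow> nat \<Rightarrow> nat"
    and l :: "nat \<Rightarrow> 'v multiset"
    and subN :: "nat \<Rightarrow> nat set" and subE :: "nat \<Rightarrow> 'v \<Rightarrow> nat set"
    and subsrc subtgt :: "nat \<Rightarrow> 'v \<Rightarrow> nat \<Rightarrow> nat"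
    and subl :: "nat \<Rightarrow> nat \<Rightarrow> 'v multiset"
    and src_sub tgt_sub :: "'v \<Rightarrow> nat \<Rightarrow> nat"
  assumes x_dom: "x \<in> subst_dom \<sigma>"
    and outer: "sharing_graph (mgu_p S (single_subst x (\<sigma> x))) (\<sigma>(x := Var x)) N E src tgt l"
    and inner: "r \<in> N \<Longrightarrow> sharing_graph S (single_subst x (\<sigma> x)) (subN r) (subE r) (subsrc r) (subtgt r) (subl r)"
    and label: "r \<in> N \<Longrightarrow> l r = sum (subl r) (subN r)"
    and src_sub_node: "y \<in> subst_dom \<sigma> \<Longrightarrow> y \<noteq> x \<Longrightarrow> e \<in> E y \<Longrightarrow> src_sub y e \<in> subN (src y e)"
    and tgt_sub_node: "y \<in> subst_dom \<sigma> \<Longrightarrow> y \<noteq> x \<Longrightarrow> e \<in> E y \<Longrightarrow> tgt_sub y e \<in> subN (tgt y e)"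
    and src_sub_card: "y \<in> subst_dom \<sigma> \<Longrightarrow> y \<noteq> x \<Longrightarrow> r \<in> N \<Longrightarrow> n \<in> subN r \<Longrightarrow>
      card {e\<in>E y. src y e = r \<and> src_sub y e = n} = chi (subl r n) (Var y :: ('f, 'v) fterm)"
    and tgt_sub_card: "y \<in> subst_dom \<sigma> \<Longrightarrow> y \<noteq> x \<Longrightarrow> r \<in> N \<Longrightarrow> n \<in> subN r \<Longrightarrow>
      card {e\<in>E y. tgt y e = r \<and> tgt_sub y e = n} = chi (subl r n) (\<sigma> y)"
begin

lemma outer_graph:
  shows finite_N: "finite N" and nonempty_N: "N \<noteq> {}"
    and outer_finite: "y \<in> subst_dom \<sigma> \<Longrightarrow> y \<noteq> x \<Longrightarrow> finite (E y)"
    and outer_ends: "y \<in> subst_dom \<sigma> \<Longrightarrow> y \<noteq> x \<Longrightarrow> e \<in> E y \<Longrightarrow> src y e \<in> N \<and> tgt y e \<in> N"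
    and outer_disjoint: "y \<in> subst_dom \<sigma> \<Longrightarrow> z \<in> subst_dom \<sigma> \<Longrightarrow> y \<noteq> x \<Longrightarrow> z \<noteq> x \<Longrightarrow> y \<noteq> z \<Longrightarrow>
      E y \<inter> E z = {}"
    and outer_connected: "r \<in> N \<Longrightarrow> r' \<in> N \<Longrightarrow>
      (r, r') \<in> (\<Union>y\<in>subst_dom \<sigma> - {x}. layer_links E src tgt y)\<^sup>*"
  using outer unfolding sharing_graph_iff subst_dom_fun_upd_Var by blast+

lemma dom_single_subst: "subst_dom (single_subst x (\<sigma> x)) = {x}"
  using x_dom by (intro subst_dom_single_subst) (simp add: subst_dom_def)

lemma inner_graph:
  assumes "r \<in> N"
  shows inner_finite: "finite (subN r)" and inner_nonempty: "subN r \<noteq> {}"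
    and inner_labels: "n \<in> subN r \<Longrightarrow> subl r n \<in> S"
    and inner_finite_edges: "finite (subE r x)"
    and inner_ends: "e \<in> subE r x \<Longrightarrow> subsrc r x e \<in> subN r \<and> subtgt r x e \<in> subN r"
    and inner_deg_src: "n \<in> subN r \<Longrightarrow> card {e\<in>subE r x. subsrc r x e = n} = chi (subl r n) (Var x :: ('f, 'v) fterm)"
    and inner_deg_tgt: "n \<in> subN r \<Longrightarrow> card {e\<in>subE r x. subtgt r x e = n} = chi (subl r n) (\<sigma> x)"
    and inner_connected: "n \<in> subN r \<Longrightarrow> m \<in> subN r \<Longrightarrow>
      (n, m) \<in> (layer_links (subE r) (subsrc r) (subtgt r) x)\<^sup>*"
  using inner[OF assms] unfolding sharing_graph_iff dom_single_subst
  by (auto simp: single_subst_def)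

definition inner_edge :: "nat \<Rightarrow> nat \<Rightarrow> nat" where
  "inner_edge r e = Suc (2 * prod_encode (r, e))"

definition expanded_nodes :: "nat set" where
  "expanded_nodes = prod_encode ` Sigma N subN"

definition expanded_label :: "nat \<Rightarrow> 'v multiset" where
  "expanded_label k = (case prod_decode k of (r, n) \<Rightarrow> subl r n)"

definition expanded_edges :: "'v \<Rightarrow> nat set" where
  "expanded_edges y =
     (if y = x then (\<lambda>(r, e). inner_edge r e) ` Sigma N (\<lambda>r. subE r x) else (\<lambda>e. 2 * e) ` E y)"

definition expanded_end ::
  "(nat \<Rightarrow> 'v \<Rightarrow> nat \<Rightarrow> nat) \<Rightarrow> ('v \<Rightarrow> nat \<Rightarrow> nat) \<Rightarrow> ('v \<Rightarrow> nat \<Rightarrow> nat) \<Rightarrow> 'v \<Rightarrow> nat \<Rightarrow> nat" where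
  "expanded_end inner_end outer_end h y k =
     (if y = x then (case prod_decode (k div 2) of (r, e) \<Rightarrow> prod_encode (r, inner_end r x e))
      else prod_encode (outer_end y (k div 2), h y (k div 2)))"

abbreviation "expanded_src \<equiv> expanded_end subsrc src src_sub"
abbreviation "expanded_tgt \<equiv> expanded_end subtgt tgt tgt_sub"

lemma expanded_end_inner_edge [simp]:
  "expanded_end inner_end outer_end h x (inner_edge r e) = prod_encode (r, inner_end r x e)"
  by (simp add: expanded_end_def inner_edge_def)

lemma expanded_end_outer_edge [simp]:
  "y \<noteq> x \<Longrightarrow> expanded_end inner_end outer_end h y (2 * e) = prod_encode (outer_end y e, h y e)"
  by (simp add: expanded_end_def)

lemma expanded_label_prod_encode [simp]: "expanded_label (prod_encode (r, n)) = subl r n"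
  by (simp add: expanded_label_def)

lemma inj_inner_edge: "inner_edge r e = inner_edge r' e' \<longleftrightarrow> r = r' \<and> e = e'"
  by (simp add: inner_edge_def)

lemma card_expanded_end_inner:
  assumes "r \<in> N"
  shows "card {k\<in>expanded_edges x. expanded_end inner_end outer_end h x k = prod_encode (r, n)} =
    card {e\<in>subE r x. inner_end r x e = n}"
proof -
  have "{k\<in>expanded_edges x. expanded_end inner_end outer_end h x k = prod_encode (r, n)} =
      inner_edge r ` {e\<in>subE r x. inner_end r x e = n}"
    using assms by (auto simp: expanded_edges_def)
  moreover have "inj_on (inner_edge r) A" for A
    by (simp add: inj_on_def inj_inner_edge)
  ultimately show ?thesis
    by (simp add: card_image)
qed

lemma card_expanded_end_outer:
  assumes "y \<noteq> x"
  shows "card {k\<in>expanded_edges y. expanded_end inner_end outer_end h y k = prod_encode (r, n)} =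
    card {e\<in>E y. outer_end y e = r \<and> h y e = n}"
proof -
  have "{k\<in>expanded_edges y. expanded_end inner_end outer_end h y k = prod_encode (r, n)} =
      (\<lambda>e. 2 * e) ` {e\<in>E y. outer_end y e = r \<and> h y e = n}"
    using assms by (auto simp: expanded_edges_def)
  moreover have "inj_on (\<lambda>e::nat. 2 * e) A" for A
    by (simp add: inj_on_def)
  ultimately show ?thesis
    by (simp add: card_image)
qed

abbreviation "expanded_links \<equiv> \<Union>y\<in>subst_dom \<sigma>. layer_links expanded_edges expanded_src expanded_tgt y"

lemma expanded_links_inner:
  assumes r: "r \<in> N" and ab: "(a, b) \<in> layer_links (subE r) (subsrc r) (subtgt r) x"
  shows "(prod_encode (r, a), prod_encode (r, b)) \<in> expanded_links"
proof -
  obtain e where e: "e \<in> subE r x" and "(a, b) = (subsrc r x e, subtgt r x e) \<or> (a, b) = (subtgt r x e, subsrc r x e)"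
    using ab by (auto simp: layer_links_def)
  moreover have "inner_edge r e \<in> expanded_edges x"
    using r e by (auto simp: expanded_edges_def)
  ultimately show ?thesis
    using x_dom unfolding layer_links_def by fastforce
qed

lemma expanded_links_outer:
  assumes y: "y \<in> subst_dom \<sigma>" "y \<noteq> x" and e: "e \<in> E y"
  shows "(prod_encode (src y e, src_sub y e), prod_encode (tgt y e, tgt_sub y e)) \<in> expanded_links"
    and "(prod_encode (tgt y e, tgt_sub y e), prod_encode (src y e, src_sub y e)) \<in> expanded_links"
proof -
  have "2 * e \<in> expanded_edges y"
    using y e by (simp add: expanded_edges_def)
  then show "(prod_encode (src y e, src_sub y e), prod_encode (tgt y e, tgt_sub y e)) \<in> expanded_links"
    and "(prod_encode (tgt y e, tgt_sub y e), prod_encode (src y e, src_sub y e)) \<in> expanded_links"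
    using y unfolding layer_links_def by (fastforce intro!: exI[of _ "2 * e"])+
qed

lemma expanded_connected_within:
  assumes "r \<in> N" and "n \<in> subN r" and "m \<in> subN r"
  shows "(prod_encode (r, n), prod_encode (r, m)) \<in> expanded_links\<^sup>*"
  using inner_connected[OF assms] by (rule rtrancl_map_rtrancl) (use expanded_links_inner[OF assms(1)] in blast)

lemma expanded_connected_between:
  assumes "(r, r') \<in> (\<Union>y\<in>subst_dom \<sigma> - {x}. layer_links E src tgt y)\<^sup>*" and "r \<in> N" and "n \<in> subN r"
  shows "r' \<in> N \<and> (\<forall>m\<in>subN r'. (prod_encode (r, n), prod_encode (r', m)) \<in> expanded_links\<^sup>*)"
  using assms(1)
proof (induction rule: rtrancl_induct)
  case base
  then show ?case
    using assms(2,3) expanded_connected_within by blast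
next
  case (step r1 r2)
  obtain y e where y: "y \<in> subst_dom \<sigma>" "y \<noteq> x" and e: "e \<in> E y"
    and r12: "(r1, r2) = (src y e, tgt y e) \<or> (r1, r2) = (tgt y e, src y e)"
    using step.hyps(2) by (auto simp: layer_links_def)
  have "r2 \<in> N \<and> (\<exists>a\<in>subN r1. \<exists>b\<in>subN r2. (prod_encode (r1, a), prod_encode (r2, b)) \<in> expanded_links)"
    using r12 outer_ends[OF y e] src_sub_node[OF y e] tgt_sub_node[OF y e] expanded_links_outer[OF y e] by auto
  then obtain a b where r2: "r2 \<in> N" and a: "a \<in> subN r1" and b: "b \<in> subN r2"
    and ab: "(prod_encode (r1, a), prod_encode (r2, b)) \<in> expanded_links"
    by blast
  have "(prod_encode (r, n), prod_encode (r2, m)) \<in> expanded_links\<^sup>*" if m: "m \<in> subN r2" for m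
  proof -
    have "(prod_encode (r, n), prod_encode (r1, a)) \<in> expanded_links\<^sup>*"
      using step.IH a by blast
    also have "(prod_encode (r1, a), prod_encode (r2, b)) \<in> expanded_links\<^sup>*"
      using ab by blast
    also have "(prod_encode (r2, b), prod_encode (r2, m)) \<in> expanded_links\<^sup>*"
      using r2 b m by (rule expanded_connected_within)
    finally show ?thesis .
  qed
  with r2 show ?case
    by blast
qed

lemma expanded_nodes_cases:
  assumes "k \<in> expanded_nodes"
  obtains r n where "r \<in> N" and "n \<in> subN r" and "k = prod_encode (r, n)"
  using assms by (auto simp: expanded_nodes_def)

lemma expanded_sharing_graph:
  "sharing_graph S \<sigma> expanded_nodes expanded_edges expanded_src expanded_tgt expanded_label"
  unfolding sharing_graph_iff
proof (intro conjI ballI)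
  show "finite expanded_nodes"
    using finite_N inner_finite by (simp add: expanded_nodes_def)
  show "expanded_nodes \<noteq> {}"
    using nonempty_N inner_nonempty by (auto simp: expanded_nodes_def)
  show "expanded_label k \<in> S" if "k \<in> expanded_nodes" for k
    using that inner_labels by (auto elim: expanded_nodes_cases)
next
  fix y assume y: "y \<in> subst_dom \<sigma>"
  show "finite (expanded_edges y)"
    using y finite_N inner_finite_edges outer_finite by (simp add: expanded_edges_def)
  show "expanded_src y k \<in> expanded_nodes" and "expanded_tgt y k \<in> expanded_nodes"
    if "k \<in> expanded_edges y" for k
    using that y inner_ends outer_ends src_sub_node tgt_sub_node
    by (auto simp: expanded_edges_def expanded_nodes_def split: if_splits)
  fix k assume "k \<in> expanded_nodes"
  then obtain r n where r: "r \<in> N" and n: "n \<in> subN r" and k: "k = prod_encode (r, n)"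
    by (rule expanded_nodes_cases)
  show "card {e\<in>expanded_edges y. expanded_src y e = k} = chi (expanded_label k) (Var y :: ('f, 'v) fterm)"
    unfolding k using y r n inner_deg_src src_sub_card
    by (cases "y = x") (simp_all add: card_expanded_end_inner card_expanded_end_outer)
  show "card {e\<in>expanded_edges y. expanded_tgt y e = k} = chi (expanded_label k) (\<sigma> y)"
    unfolding k using y r n inner_deg_tgt tgt_sub_card
    by (cases "y = x") (simp_all add: card_expanded_end_inner card_expanded_end_outer)
next
  fix y z assume "y \<in> subst_dom \<sigma>" and "z \<in> subst_dom \<sigma>"
  then show "y \<noteq> z \<longrightarrow> expanded_edges y \<inter> expanded_edges z = {}"
    using outer_disjoint[of y z]
    by (auto simp: expanded_edges_def inner_edge_def) presburger+
next
  fix k k' assume "k \<in> expanded_nodes" and "k' \<in> expanded_nodes"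
  then show "(k, k') \<in> expanded_links\<^sup>*"
    using expanded_connected_between outer_connected by (metis expanded_nodes_cases)
qed

lemma sum_expanded_label: "sum expanded_label expanded_nodes = sum l N"
proof -
  have "sum expanded_label expanded_nodes = (\<Sum>(r, n)\<in>Sigma N subN. subl r n)"
    unfolding expanded_nodes_def by (simp add: sum.reindex inj_on_def case_prod_unfold expanded_label_def)
  also have "\<dots> = (\<Sum>r\<in>N. sum (subl r) (subN r))"
    using finite_N inner_finite by (simp add: sum.Sigma)
  also have "\<dots> = sum l N"
    using label by simp
  finally show ?thesis .
qed

lemma resultant_in_mgu_p: "sum l N \<in> mgu_p S \<sigma>"
  using mgu_pI[OF expanded_sharing_graph] by (simp add: sum_expanded_label)

end

lemma mgu_p_split_binding_subset:
  fixes \<sigma> :: "'v \<Rightarrow> ('f, 'v) fterm"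
  assumes x: "x \<in> subst_dom \<sigma>"
  shows "mgu_p (mgu_p S (single_subst x (\<sigma> x))) (\<sigma>(x := Var x)) \<subseteq> mgu_p S \<sigma>"
proof
  let ?S' = "mgu_p S (single_subst x (\<sigma> x))"
  let ?D = "subst_dom \<sigma> - {x}"
  fix B assume "B \<in> mgu_p ?S' (\<sigma>(x := Var x))"
  then obtain N E src tgt l where G: "sharing_graph ?S' (\<sigma>(x := Var x)) N E src tgt l" and B: "B = sum l N"
    unfolding mgu_p_def by blast
  have fE: "\<And>y. y \<in> ?D \<Longrightarrow> finite (E y)"
    and ends: "\<And>y e. y \<in> ?D \<Longrightarrow> e \<in> E y \<Longrightarrow> src y e \<in> N \<and> tgt y e \<in> N"
    and deg_src: "\<And>y r. y \<in> ?D \<Longrightarrow> r \<in> N \<Longrightarrow> card {e\<in>E y. src y e = r} = chi (l r) (Var y :: ('f, 'v) fterm)"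
    and deg_tgt: "\<And>y r. y \<in> ?D \<Longrightarrow> r \<in> N \<Longrightarrow> card {e\<in>E y. tgt y e = r} = chi (l r) (\<sigma> y)"
    and lS': "\<forall>r\<in>N. l r \<in> ?S'"
    using G unfolding sharing_graph_iff subst_dom_fun_upd_Var by auto
  have "\<forall>r\<in>N. \<exists>Nr Er sr tr lr. l r = sum lr Nr \<and> sharing_graph S (single_subst x (\<sigma> x)) Nr Er sr tr lr"
    using lS' unfolding mgu_p_def by blast
  then obtain subN subE subsrc subtgt subl where inner: "\<And>r. r \<in> N \<Longrightarrow>
      l r = sum (subl r) (subN r) \<and> sharing_graph S (single_subst x (\<sigma> x)) (subN r) (subE r) (subsrc r) (subtgt r) (subl r)"
    unfolding bchoice_iff by blast
  have fsubN: "finite (subN r)" if "r \<in> N" for r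
    using inner[OF that] unfolding sharing_graph_iff by blast
  have chi_l: "chi (l r) t = (\<Sum>n\<in>subN r. chi (subl r n) t)" if "r \<in> N" for r and t :: "('f, 'v) fterm"
    using inner[OF that] fsubN[OF that] by (simp add: chi_sum)
  have "\<exists>h. \<forall>y\<in>?D. (\<forall>e\<in>E y. src y e \<in> N \<longrightarrow> h y e \<in> subN (src y e)) \<and>
      (\<forall>r\<in>N. \<forall>n\<in>subN r. card {e\<in>E y. src y e = r \<and> h y e = n} = chi (subl r n) (Var y :: ('f, 'v) fterm))"
    by (rule exists_layered_refinement_with_fibre_cards) (use fE fsubN deg_src chi_l in auto)
  then obtain src_sub where src_sub: "\<forall>y\<in>?D. (\<forall>e\<in>E y. src y e \<in> N \<longrightarrow> src_sub y e \<in> subN (src y e)) \<and>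
      (\<forall>r\<in>N. \<forall>n\<in>subN r. card {e\<in>E y. src y e = r \<and> src_sub y e = n} = chi (subl r n) (Var y :: ('f, 'v) fterm))"
    by blast
  have "\<exists>h. \<forall>y\<in>?D. (\<forall>e\<in>E y. tgt y e \<in> N \<longrightarrow> h y e \<in> subN (tgt y e)) \<and>
      (\<forall>r\<in>N. \<forall>n\<in>subN r. card {e\<in>E y. tgt y e = r \<and> h y e = n} = chi (subl r n) (\<sigma> y))"
    by (rule exists_layered_refinement_with_fibre_cards) (use fE fsubN deg_tgt chi_l in auto)
  then obtain tgt_sub where tgt_sub: "\<forall>y\<in>?D. (\<forall>e\<in>E y. tgt y e \<in> N \<longrightarrow> tgt_sub y e \<in> subN (tgt y e)) \<and>
      (\<forall>r\<in>N. \<forall>n\<in>subN r. card {e\<in>E y. tgt y e = r \<and> tgt_sub y e = n} = chi (subl r n) (\<sigma> y))"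
    by blast
  interpret sharing_graph_expansion S \<sigma> x N E src tgt l subN subE subsrc subtgt subl src_sub tgt_sub
  proof
    show "x \<in> subst_dom \<sigma>" by (fact x)
    show "sharing_graph ?S' (\<sigma>(x := Var x)) N E src tgt l" by (fact G)
  qed (use inner src_sub tgt_sub ends in \<open>simp_all\<close>)
  show "B \<in> mgu_p S \<sigma>"
    unfolding B by (rule resultant_in_mgu_p)
qed

lemma mgu_p_split_binding:
  fixes \<sigma> :: "'v \<Rightarrow> ('f, 'v) fterm"
  assumes "x \<in> subst_dom \<sigma>"
  shows "mgu_p (mgu_p S (single_subst x (\<sigma> x))) (\<sigma>(x := Var x)) = mgu_p S \<sigma>"
  using mgu_p_split_binding_subset[OF assms] mgu_p_subset_split_binding[OF assms] by (rule antisym)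

lemma mgu_omega_eq_mgu_p:
  assumes "distinct (map fst bs)" and "set bs = {(x, \<sigma> x) | x. x \<in> subst_dom \<sigma>}"
  shows "mgu_omega S bs = mgu_p S \<sigma>"
  using assms
proof (induction bs arbitrary: S \<sigma>)
  case Nil
  then show ?case
    by (simp add: mgu_p_empty_subst)
next
  case (Cons b bs)
  obtain x t where b: "b = (x, t)"
    by fastforce
  with Cons.prems have t: "t = \<sigma> x" and x: "x \<in> subst_dom \<sigma>"
    by auto
  have "set bs = set (b # bs) - {(x, t)}"
    using Cons.prems(1) b by force
  then have "set bs = {(y, (\<sigma>(x := Var x)) y) | y. y \<in> subst_dom (\<sigma>(x := Var x))}"
    using Cons.prems(2) t by (auto simp: subst_dom_fun_upd_Var)
  then have "mgu_omega (mgu_p S (single_subst x t)) bs = mgu_p (mgu_p S (single_subst x t)) (\<sigma>(x := Var x))"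
    using Cons.IH Cons.prems(1) by simp
  then show ?case
    using b t mgu_p_split_binding[OF x] by simp
qed

theorem theorem1:
  fixes S :: "'v::countable multiset set"
    and \<sigma> :: "'v \<Rightarrow> ('f, 'v) fterm"
    and bs :: "('v \<times> ('f, 'v) fterm) list"
  assumes "infinite (UNIV :: 'v set)"
    and "idempotent_subst \<sigma>"
    and "distinct (map fst bs)"
    and "set bs = {(x, \<sigma> x) | x. x \<in> subst_dom \<sigma>}"
  shows "mgu_omega S bs = mgu_p S \<sigma>"
  using assms(3,4) by (rule mgu_omega_eq_mgu_p)

end
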